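(* Under the setting and hypotheses of Theorem 1 (state-feedback protocol, all roots of $s^{m-1}+a_{m-1}s^{m-2}+\cdots+a_1$ with strictly negative real part, $\mathcal{G}_{\sigma(t)}$ uniformly jointly quasi-strongly connected), assume in addition that every graph $\mathcal{G}_k$, $k\in\mathcal{S}$, is balanced, i.e. $1_N^TL_{\mathcal{G}_k}=0_N^T$. Then for every initial condition, $$\lim_{t\to\infty}x_i(t)=\Big(\frac{1}{a_1N}\sum_{j=1}^N K_2x_j(0),\,0,\dots,0\Big)^T,\qquad i=1,\dots,N.$$
   Context: Agents: $\dot x_i=Ax_i+Bu_i$, $x_i\in\mathbb{R}^m$, $m\ge2$, where $A$ has ones on the superdiagonal and zeros elsewhere and $B=(0,\dots,0,1)^T$. Protocol: $u_i=K_1x_i-\sum_{j\in\mathcal{N}_i(\sigma(t))}\alpha^{ij}_{\sigma(t)}K_2(x_i-x_j)$ with $K_1=(0,-a_1,\dots,-a_{m-1})$, $K_2=(a_1,\dots,a_{m-1},1)$. Switching digraphs $\mathcal{G}_{\sigma(t)}$ from a finite family with positive edge weights $\alpha^{ij}_k$ (edge $e_{ij}$: $i$ receives from $j$, no self-loops), piecewise constant $\sigma$ with dwell time bounded below by $\tau_D>0$. Laplacian $L_{\mathcal{G}_k}$: off-diagonal entry $(i,j)$ equals $-\alpha^{ij}_k$, diagonal entry $(i,i)$ equals $\sum_{j\in\mathcal{N}_i(k)}\alpha^{ij}_k$. Uniformly jointly quasi-strongly connected: there is $T>0$ such that for every $t\ge0$ the union of edges of $\mathcal{G}_{\sigma(s)}$,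 $s\in[t,t+T)$, forms a digraph with a node from which every other node is reachable by a directed path. *)

theory Defs
  imports "HOL-Analysis.Analysis" "HOL-Computational_Algebra.Polynomial"
begin

(* Conventions: agents are indexed 0..N-1, state components 0..m-1 (0-based),
   so x_i = (x_i 0, ..., x_i (m-1)).  The coefficients a_1..a_{m-1} are a 1 .. a (m-1). *)

definition char_poly :: "nat \<Rightarrow> (nat \<Rightarrow> real) \<Rightarrow> complex poly" where
  "char_poly m a = monom 1 (m - 1) + (\<Sum>k\<in>{1..m-1}. monom (complex_of_real (a k)) (k - 1))"

definition K1 :: "nat \<Rightarrow> (nat \<Rightarrow> real) \<Rightarrow> nat \<Rightarrow> real" where
  "K1 m a l = (if l = 0 then 0 else - a l)"

definition K2 :: "nat \<Rightarrow> (nat \<Rightarrow> real) \<Rightarrow> nat \<Rightarrow> real" where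
  "K2 m a l = (if l < m - 1 then a (l + 1) else 1)"

definition rowmul :: "nat \<Rightarrow> (nat \<Rightarrow> real) \<Rightarrow> (nat \<Rightarrow> real) \<Rightarrow> real" where
  "rowmul m K v = (\<Sum>l<m. K l * v l)"

text \<open>Component k of A v (A has ones on the superdiagonal).\<close>
definition Amul :: "nat \<Rightarrow> (nat \<Rightarrow> real) \<Rightarrow> nat \<Rightarrow> real" where
  "Amul m v k = (if k + 1 < m then v (k + 1) else 0)"

text \<open>Component k of B u, with B = (0,...,0,1)^T.\<close>
definition Bmul :: "nat \<Rightarrow> real \<Rightarrow> nat \<Rightarrow> real" where
  "Bmul m u k = (if k = m - 1 then u else 0)"

text \<open>Graph k has edge e_ij (i receives from j) iff alpha k i j > 0.
  Laplacian of graph k: diagonal = sum of incoming weights, off-diagonal = - alpha.\<close>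
definition laplacian :: "nat \<Rightarrow> ('k \<Rightarrow> nat \<Rightarrow> nat \<Rightarrow> real) \<Rightarrow> 'k \<Rightarrow> nat \<Rightarrow> nat \<Rightarrow> real" where
  "laplacian N \<alpha> k i j = (if i = j then (\<Sum>l\<in>{l. l < N \<and> \<alpha> k i l > 0}. \<alpha> k i l) else - \<alpha> k i j)"

definition balanced :: "nat \<Rightarrow> ('k \<Rightarrow> nat \<Rightarrow> nat \<Rightarrow> real) \<Rightarrow> 'k \<Rightarrow> bool" where
  "balanced N \<alpha> k \<longleftrightarrow> (\<forall>j<N. (\<Sum>i<N. laplacian N \<alpha> k i j) = 0)"

definition protocol ::
  "nat \<Rightarrow> nat \<Rightarrow> (nat \<Rightarrow> real) \<Rightarrow> ('k \<Rightarrow> nat \<Rightarrow> nat \<Rightarrow> real) \<Rightarrow> 'k \<Rightarrow> (nat \<Rightarrow> nat \<Rightarrow> real) \<Rightarrow> nat \<Rightarrow> real" where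
  "protocol N m a \<alpha> k X i =
     rowmul m (K1 m a) (X i)
     - (\<Sum>j\<in>{j. j < N \<and> \<alpha> k i j > 0}. \<alpha> k i j * rowmul m (K2 m a) (\<lambda>l. X i l - X j l))"

definition closed_loop ::
  "nat \<Rightarrow> nat \<Rightarrow> (nat \<Rightarrow> real) \<Rightarrow> ('k \<Rightarrow> nat \<Rightarrow> nat \<Rightarrow> real) \<Rightarrow> 'k \<Rightarrow> (nat \<Rightarrow> nat \<Rightarrow> real) \<Rightarrow> nat \<Rightarrow> nat \<Rightarrow> real" where
  "closed_loop N m a \<alpha> k X i l = Amul m (X i) l + Bmul m (protocol N m a \<alpha> k X i) l"

definition dwell_switching :: "real \<Rightarrow> (real \<Rightarrow> 'k) \<Rightarrow> (nat \<Rightarrow> real) \<Rightarrow> bool" where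
  "dwell_switching \<tau>D \<sigma> ts \<longleftrightarrow> ts 0 = 0 \<and> (\<forall>n. ts (Suc n) - ts n \<ge> \<tau>D) \<and>
     (\<forall>n t. ts n \<le> t \<and> t < ts (Suc n) \<longrightarrow> \<sigma> t = \<sigma> (ts n))"

text \<open>Union digraph over [t, t+T): pair (j,i) means an edge e_ij, i.e. information flows from j to i.\<close>
definition union_edges :: "nat \<Rightarrow> ('k \<Rightarrow> nat \<Rightarrow> nat \<Rightarrow> real) \<Rightarrow> (real \<Rightarrow> 'k) \<Rightarrow> real \<Rightarrow> real \<Rightarrow> (nat \<times> nat) set" where
  "union_edges N \<alpha> \<sigma> t T = {(j, i). i < N \<and> j < N \<and> (\<exists>s. t \<le> s \<and> s < t + T \<and> \<alpha> (\<sigma> s) i j > 0)}"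

definition UJQSC :: "nat \<Rightarrow> ('k \<Rightarrow> nat \<Rightarrow> nat \<Rightarrow> real) \<Rightarrow> (real \<Rightarrow> 'k) \<Rightarrow> bool" where
  "UJQSC N \<alpha> \<sigma> \<longleftrightarrow> (\<exists>T>0. \<forall>t\<ge>0. \<exists>r<N. \<forall>v<N. (r, v) \<in> (union_edges N \<alpha> \<sigma> t T)\<^sup>*)"

end

theory Submission
  imports Defs "HOL-Real_Asymp.Real_Asymp" "HOL-Computational_Algebra.Fundamental_Theorem_Algebra"
begin

text \<open>The outputs \<open>y\<^sub>i = K\<^sub>2 x\<^sub>i\<close> obey the consensus dynamics \<open>y' = - L\<^sub>\<sigma> y\<close>, because in
  \<open>K\<^sub>2 (A x\<^sub>i + B u\<^sub>i)\<close> the drift \<open>K\<^sub>2 A x\<^sub>i\<close> cancels against \<open>K\<^sub>1 x\<^sub>i\<close>. For balanced graphs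
  \<open>\<Sum>i. y\<^sub>i\<close> is invariant and the disagreement \<open>V = \<Sum>i. (y\<^sub>i - y_avg)\<^sup>2\<close> decreases at the rate
  \<open>\<Sum>i j. \<alpha>\<^sub>i\<^sub>j (y\<^sub>i - y\<^sub>j)\<^sup>2\<close>. As \<open>V \<ge> 0\<close>, on some window of length \<open>T + 2 \<tau>D\<close> it drops only
  a little. Every edge of the union graph over \<open>[t, t + T)\<close> is active on a dwell interval inside that
  window, so its ends nearly agree at some moment there; the \<open>y\<^sub>i\<close> move slowly unless \<open>V\<close> drops,
  so they nearly agree at time \<open>t\<close> as well, and a spanning tree of the union graph spreads the
  agreement to all agents. Hence \<open>V \<longrightarrow> 0\<close> and \<open>y\<^sub>i \<longrightarrow> y_avg\<close>. Finally the components of \<open>x\<^sub>i\<close> form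
  the companion system of the Hurwitz polynomial \<open>s\<^sup>m\<^sup>-\<^sup>1 + a\<^sub>m\<^sub>-\<^sub>1 s\<^sup>m\<^sup>-\<^sup>2 + \<dots> + a\<^sub>1\<close> driven by
  \<open>y\<^sub>i\<close>; splitting off its stable linear factors one at a time gives
  \<open>x\<^sub>i \<longrightarrow> (y_avg / a\<^sub>1, 0, \<dots>, 0)\<close>.\<close>

section \<open>Stable linear differential equations\<close>

lemma DERIV_nonpos_imp_le_off_finite:
  fixes g g' :: "real \<Rightarrow> real"
  assumes "a \<le> b" "finite F" "continuous_on {a..b} g"
    and "\<And>t. t \<in> {a<..<b} - F \<Longrightarrow> (g has_real_derivative g' t) (at t)"
    and "\<And>t. t \<in> {a<..<b} - F \<Longrightarrow> g' t \<le> 0"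
  shows "g b \<le> g a"
proof -
  let ?h = "\<lambda>t. if t \<in> {a<..<b} - F then g' t else 0"
  have "(?h has_integral (g b - g a)) {a..b}"
    using assms(4)
    by (intro fundamental_theorem_of_calculus_interior_strong[OF assms(2,1) _ assms(3)])
       (auto simp: has_real_derivative_iff_has_vector_derivative[symmetric])
  moreover have "?h t \<le> 0" for t
    using assms(5) by auto
  ultimately show ?thesis
    using has_integral_le[OF _ has_integral_0, of ?h "g b - g a" "{a..b}"] by auto
qed

lemma linear_decay_bound:
  fixes w w' :: "real \<Rightarrow> real"
  assumes "t0 \<le> t" "finite F" "continuous_on {t0..t} w"
    and "\<And>s. s \<in> {t0<..<t} - F \<Longrightarrow> (w has_real_derivative w' s) (at s)"
    and "\<And>s. s \<in> {t0<..<t} - F \<Longrightarrow> w' s \<le> - \<mu> * (w s - K)"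
  shows "w t \<le> K + (w t0 - K) * exp (- \<mu> * (t - t0))"
proof -
  define \<phi> where "\<phi> s = (w s - K) * exp (\<mu> * s)" for s
  have "\<phi> t \<le> \<phi> t0"
  proof (rule DERIV_nonpos_imp_le_off_finite[OF assms(1,2)])
    show "continuous_on {t0..t} \<phi>"
      unfolding \<phi>_def by (intro continuous_intros assms(3))
    fix s assume s: "s \<in> {t0<..<t} - F"
    show "(\<phi> has_real_derivative (w' s + \<mu> * (w s - K)) * exp (\<mu> * s)) (at s)"
      unfolding \<phi>_def by (auto intro!: derivative_eq_intros assms(4)[OF s] simp: algebra_simps)
    show "(w' s + \<mu> * (w s - K)) * exp (\<mu> * s) \<le> 0"
      using assms(5)[OF s] by (simp add: mult_nonpos_nonneg)
  qed
  then have "w t - K \<le> (w t0 - K) * exp (\<mu> * t0) / exp (\<mu> * t)"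
    by (simp add: \<phi>_def pos_le_divide_eq)
  also have "\<dots> = (w t0 - K) * (exp (\<mu> * t0) / exp (\<mu> * t))"
    by (rule times_divide_eq_right [symmetric])
  also have "exp (\<mu> * t0) / exp (\<mu> * t) = exp (- \<mu> * (t - t0))"
    by (simp add: exp_diff [symmetric] algebra_simps)
  finally show ?thesis by simp
qed

lemma linear_decay_tendsto_0:
  fixes w w' :: "real \<Rightarrow> real"
  assumes "\<mu> > 0" and E: "\<And>b. finite (E \<inter> {..b})" and "continuous_on {0..} w"
    and nonneg: "\<And>t. 0 \<le> w t"
    and deriv: "\<And>t. 0 < t \<Longrightarrow> t \<notin> E \<Longrightarrow> (w has_real_derivative w' t) (at t)"
    and decay: "\<And>K. K > 0 \<Longrightarrow> \<forall>\<^sub>F t in at_top. w' t \<le> - \<mu> * (w t - K)"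
  shows "(w \<longlongrightarrow> 0) at_top"
  unfolding tendsto_iff
proof (intro allI impI)
  fix \<epsilon> :: real assume "\<epsilon> > 0"
  define K where "K = \<epsilon> / 2"
  obtain t1 where t1: "\<And>t. t1 \<le> t \<Longrightarrow> w' t \<le> - \<mu> * (w t - K)"
    using decay[of K] \<open>\<epsilon> > 0\<close> unfolding K_def eventually_at_top_linorder by auto
  define t0 where "t0 = max 0 t1"
  have t0: "0 \<le> t0" "\<And>t. t0 \<le> t \<Longrightarrow> w' t \<le> - \<mu> * (w t - K)"
    using t1 by (auto simp: t0_def)
  have bound: "w t \<le> K + (w t0 - K) * exp (- \<mu> * (t - t0))" if "t0 \<le> t" for t
  proof (rule linear_decay_bound[OF that E[of t], where w' = w'])
    show "continuous_on {t0..t} w"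
      using t0(1) by (intro continuous_on_subset[OF assms(3)]) auto
  qed (use t0 deriv in auto)
  have "((\<lambda>t. K + (w t0 - K) * exp (- \<mu> * (t - t0))) \<longlongrightarrow> K) at_top"
    using \<open>\<mu> > 0\<close> by real_asymp
  then have "\<forall>\<^sub>F t in at_top. K + (w t0 - K) * exp (- \<mu> * (t - t0)) < \<epsilon>"
    by (rule order_tendstoD) (use \<open>\<epsilon> > 0\<close> in \<open>simp add: K_def\<close>)
  with eventually_ge_at_top[of t0] show "\<forall>\<^sub>F t in at_top. dist (w t) 0 < \<epsilon>"
  proof eventually_elim
    case (elim t)
    then have "w t < \<epsilon>" using bound[of t] by linarith
    then show ?case using nonneg[of t] by simp
  qed
qed

lemma norm_power2_has_real_derivative:
  fixes g :: "real \<Rightarrow> 'a::real_inner"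
  assumes "(g has_vector_derivative g') (at t)"
  shows "((\<lambda>s. (norm (g s))\<^sup>2) has_real_derivative 2 * inner (g t) g') (at t)"
proof -
  have "((\<lambda>s. inner (g s) (g s)) has_derivative
      (\<lambda>h. inner (g t) (h *\<^sub>R g') + inner (h *\<^sub>R g') (g t))) (at t)"
    using assms unfolding has_vector_derivative_def by (intro derivative_eq_intros) auto
  then show ?thesis
    unfolding power2_norm_eq_inner has_field_derivative_def
    by (rule has_derivative_subst) (auto simp: inner_commute algebra_simps fun_eq_iff)
qed

lemma first_order_stable_tendsto:
  fixes u f :: "real \<Rightarrow> complex"
  assumes stable: "Re \<kappa> < 0" and E: "\<And>b. finite (E \<inter> {..b})"
    and cont: "continuous_on {0..} u"
    and deriv: "\<And>t. 0 < t \<Longrightarrow> t \<notin> E \<Longrightarrow> (u has_vector_derivative \<kappa> * u t + f t) (at t)"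
    and f: "(f \<longlongrightarrow> F) at_top"
  shows "(u \<longlongrightarrow> - F / \<kappa>) at_top"
proof -
  define \<mu> where "\<mu> = - Re \<kappa>"
  have \<mu>: "\<mu> > 0" using stable by (simp add: \<mu>_def)
  define g where "g t = u t + F / \<kappa>" for t
  define w' where "w' t = 2 * inner (g t) (\<kappa> * g t + (f t - F))" for t
  have w_deriv: "((\<lambda>t. (norm (g t))\<^sup>2) has_real_derivative w' t) (at t)" if "0 < t" "t \<notin> E" for t
  proof -
    have "\<kappa> * u t + f t = \<kappa> * g t + (f t - F)"
      using stable by (auto simp: g_def field_simps)
    then have "(g has_vector_derivative \<kappa> * g t + (f t - F)) (at t)"
      unfolding g_def using deriv[OF that] by (auto intro!: derivative_eq_intros)
    then show ?thesis
      unfolding w'_def by (rule norm_power2_has_real_derivative)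
  qed
  \<comment> \<open>Young's inequality \<open>2 |g| \<eta> \<le> \<mu> |g|\<^sup>2 + \<eta>\<^sup>2 / \<mu>\<close> absorbs the forcing error \<open>\<eta>\<close>\<close>
  have w'_le: "w' t \<le> - \<mu> * ((norm (g t))\<^sup>2 - (\<eta> / \<mu>)\<^sup>2)" if "norm (f t - F) \<le> \<eta>" for t \<eta>
  proof -
    have "inner (g t) (\<kappa> * g t) = - \<mu> * (norm (g t))\<^sup>2"
      unfolding cmod_power2 by (simp add: \<mu>_def inner_complex_def power2_eq_square algebra_simps)
    moreover have "inner (g t) (f t - F) \<le> norm (g t) * \<eta>"
      using norm_cauchy_schwarz[of "g t" "f t - F"] that
      by (meson mult_left_mono norm_ge_zero order_trans)
    moreover have "2 * (norm (g t) * \<eta>) \<le> \<mu> * (norm (g t))\<^sup>2 + \<eta>\<^sup>2 / \<mu>"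
    proof -
      have "0 \<le> (\<mu> * norm (g t) - \<eta>)\<^sup>2 / \<mu>" using \<mu> by simp
      also have "\<dots> = \<mu> * (norm (g t))\<^sup>2 + \<eta>\<^sup>2 / \<mu> - 2 * (norm (g t) * \<eta>)"
        using \<mu> by (simp add: power2_eq_square field_simps)
      finally show ?thesis by simp
    qed
    moreover have "w' t = 2 * inner (g t) (\<kappa> * g t) + 2 * inner (g t) (f t - F)"
      by (simp add: w'_def inner_add_right)
    moreover have "- \<mu> * ((norm (g t))\<^sup>2 - (\<eta> / \<mu>)\<^sup>2) = - \<mu> * (norm (g t))\<^sup>2 + \<eta>\<^sup>2 / \<mu>"
      using \<mu> by (simp add: power2_eq_square field_simps)
    ultimately show ?thesis by linarith
  qed
  have "((\<lambda>t. (norm (g t))\<^sup>2) \<longlongrightarrow> 0) at_top"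
  proof (rule linear_decay_tendsto_0[OF \<mu> E _ _ w_deriv])
    show "continuous_on {0..} (\<lambda>t. (norm (g t))\<^sup>2)"
      unfolding g_def by (intro continuous_intros cont)
    fix K :: real assume "K > 0"
    then have K: "(\<mu> * sqrt K / \<mu>)\<^sup>2 = K" using \<mu> by simp
    have "\<mu> * sqrt K > 0" using \<mu> \<open>K > 0\<close> by simp
    then have "\<forall>\<^sub>F t in at_top. dist (f t) F < \<mu> * sqrt K"
      using f unfolding tendsto_iff by blast
    then show "\<forall>\<^sub>F t in at_top. w' t \<le> - \<mu> * ((norm (g t))\<^sup>2 - K)"
    proof eventually_elim
      case (elim t)
      then have "norm (f t - F) \<le> \<mu> * sqrt K" by (simp add: dist_norm)
      from w'_le[OF this] show ?case unfolding K .
    qed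
  qed auto
  then have "((\<lambda>t. sqrt ((norm (g t))\<^sup>2)) \<longlongrightarrow> sqrt 0) at_top"
    by (rule tendsto_real_sqrt)
  then have "((\<lambda>t. norm (g t)) \<longlongrightarrow> 0) at_top"
    by simp
  then have "(g \<longlongrightarrow> 0) at_top"
    by (rule tendsto_norm_zero_cancel)
  then have "((\<lambda>t. g t - F / \<kappa>) \<longlongrightarrow> 0 - F / \<kappa>) at_top"
    by (intro tendsto_diff tendsto_const)
  then show ?thesis by (simp add: g_def)
qed

text \<open>Companion form of \<open>p(d/dt) w\<^sub>0 = y\<close> for monic \<open>p\<close>: \<open>w l\<close> plays the role of the \<open>l\<close>-th derivative
  of \<open>w 0\<close>, and \<open>companion_rhs p w y l\<close> is the derivative of \<open>w l\<close>.\<close>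
definition companion_rhs :: "complex poly \<Rightarrow> (nat \<Rightarrow> complex) \<Rightarrow> complex \<Rightarrow> nat \<Rightarrow> complex" where
  "companion_rhs p w y l =
     (if Suc l < degree p then w (Suc l) else y - (\<Sum>k<degree p. coeff p k * w k))"

lemma companion_rhs_deflate:
  assumes p: "p = [:- \<kappa>, 1:] * q" and q: "lead_coeff q = 1" and l: "l < degree q"
  shows "companion_rhs p w y (Suc l) - \<kappa> * w (Suc l)
       = companion_rhs q (\<lambda>k. w (Suc k) - \<kappa> * w k) y l"
proof -
  define n where "n = degree q"
  have deg_p: "degree p = Suc n"
    using q unfolding p n_def by (subst degree_mult_eq) auto
  show ?thesis
  proof (cases "Suc l < n")
    case True
    then show ?thesis by (simp add: companion_rhs_def deg_p n_def)
  next
    case False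
    have l_eq: "Suc l = n" using False l by (simp add: n_def)
    have coeff_p: "coeff p k = (if k = 0 then 0 else coeff q (k - 1)) - \<kappa> * coeff q k" for k
      unfolding p by (cases k) (simp_all add: algebra_simps)
    have "(\<Sum>k<Suc n. coeff p k * w k)
        = (\<Sum>k<n. coeff q k * w (Suc k)) - \<kappa> * ((\<Sum>k<n. coeff q k * w k) + w n)"
    proof -
      have "(\<Sum>k<Suc n. coeff p k * w k)
          = (\<Sum>k<Suc n. (if k = 0 then 0 else coeff q (k - 1)) * w k) - \<kappa> * (\<Sum>k<Suc n. coeff q k * w k)"
        by (simp add: coeff_p algebra_simps sum_subtractf sum_distrib_left)
      also have "(\<Sum>k<Suc n. (if k = 0 then 0 else coeff q (k - 1)) * w k) = (\<Sum>k<n. coeff q k * w (Suc k))"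
        by (subst sum.lessThan_Suc_shift) simp
      also have "(\<Sum>k<Suc n. coeff q k * w k) = (\<Sum>k<n. coeff q k * w k) + w n"
        using q by (simp add: n_def)
      finally show ?thesis .
    qed
    then show ?thesis
      using l_eq by (simp add: companion_rhs_def deg_p n_def[symmetric]
          algebra_simps sum_subtractf sum_distrib_left)
  qed
qed

lemma companion_rhs_deflate_0:
  assumes p: "p = [:- \<kappa>, 1:] * q" and q: "lead_coeff q = 1"
  shows "companion_rhs p w y 0 = \<kappa> * w 0 + (if degree q = 0 then y else w (Suc 0) - \<kappa> * w 0)"
proof -
  have deg_p: "degree p = Suc (degree q)"
    using q unfolding p by (subst degree_mult_eq) auto
  show ?thesis
  proof (cases "degree q = 0")
    case True
    then have "coeff p 0 = - \<kappa>" using q unfolding p by simp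
    then show ?thesis using True by (simp add: companion_rhs_def deg_p)
  qed (simp add: companion_rhs_def deg_p)
qed

lemma companion_system_deflate:
  assumes p: "p = [:- \<kappa>, 1:] * q" and q: "lead_coeff q = 1" and k: "k < degree q"
    and deriv: "\<And>l. l < degree p \<Longrightarrow> (w l has_vector_derivative companion_rhs p (\<lambda>k. w k t) (y t) l) (at t)"
  shows "((\<lambda>s. w (Suc k) s - \<kappa> * w k s) has_vector_derivative
           companion_rhs q (\<lambda>k. w (Suc k) t - \<kappa> * w k t) (y t) k) (at t)"
proof -
  have deg_p: "degree p = Suc (degree q)"
    using q unfolding p by (subst degree_mult_eq) auto
  have "((\<lambda>s. w (Suc k) s - \<kappa> * w k s) has_vector_derivative
      companion_rhs p (\<lambda>k. w k t) (y t) (Suc k) - \<kappa> * companion_rhs p (\<lambda>k. w k t) (y t) k) (at t)"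
    using k deg_p by (intro has_vector_derivative_diff has_vector_derivative_mult_right deriv) auto
  moreover have "companion_rhs p (\<lambda>k. w k t) (y t) k = w (Suc k) t"
    using k deg_p by (simp add: companion_rhs_def)
  ultimately show ?thesis
    using companion_rhs_deflate[OF p q k, of "\<lambda>k. w k t" "y t"] by simp
qed

lemma companion_system_tendsto:
  fixes p :: "complex poly" and w :: "nat \<Rightarrow> real \<Rightarrow> complex" and y :: "real \<Rightarrow> complex"
  assumes "lead_coeff p = 1" and "\<forall>z. poly p z = 0 \<longrightarrow> Re z < 0"
    and E: "\<And>b. finite (E \<inter> {..b})"
    and "\<And>l. l < degree p \<Longrightarrow> continuous_on {0..} (w l)"
    and "\<And>t l. 0 < t \<Longrightarrow> t \<notin> E \<Longrightarrow> l < degree p \<Longrightarrow>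
           (w l has_vector_derivative companion_rhs p (\<lambda>k. w k t) (y t) l) (at t)"
    and "(y \<longlongrightarrow> Y) at_top"
    and "l < degree p"
  shows "(w l \<longlongrightarrow> (if l = 0 then Y / coeff p 0 else 0)) at_top"
  using assms(1,2,4-)
proof (induction "degree p" arbitrary: p w y Y l)
  case 0
  then show ?case by simp
next
  case (Suc n)
  note monic = Suc.prems(1) and stable = Suc.prems(2) and cont = Suc.prems(3)
    and deriv = Suc.prems(4) and y = Suc.prems(5)
  obtain \<kappa> where root: "poly p \<kappa> = 0"
    using fundamental_theorem_of_algebra constant_degree Suc.hyps(2) by (metis nat.distinct(1))
  then obtain q where p: "p = [:- \<kappa>, 1:] * q"
    by (metis dvdE poly_eq_0_iff_dvd)
  have \<kappa>: "Re \<kappa> < 0" using root stable by blast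
  have q_monic: "lead_coeff q = 1" using monic unfolding p lead_coeff_mult by simp
  have deg_q: "degree q = n"
    using Suc.hyps(2) q_monic unfolding p by (subst (asm) degree_mult_eq) auto
  have q_stable: "\<forall>z. poly q z = 0 \<longrightarrow> Re z < 0" using stable unfolding p by auto
  have coeff_q0: "coeff q 0 \<noteq> 0"
    using q_stable by (metis poly_0_coeff_0 zero_complex.sel(1) less_irrefl)
  have coeff_p0: "coeff p 0 = - \<kappa> * coeff q 0" unfolding p by simp
  define v where "v k t = w (Suc k) t - \<kappa> * w k t" for k t
  have v: "(v l \<longlongrightarrow> (if l = 0 then Y / coeff q 0 else 0)) at_top" if "l < n" for l
  proof (rule Suc.hyps(1)[OF deg_q[symmetric] q_monic q_stable _ _ y])
    show "continuous_on {0..} (v k)" if "k < degree q" for k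
      unfolding v_def using that deg_q Suc.hyps(2) by (intro continuous_intros cont) auto
    show "(v k has_vector_derivative companion_rhs q (\<lambda>k. v k t) (y t) k) (at t)"
      if "0 < t" "t \<notin> E" "k < degree q" for t k
      unfolding v_def[abs_def] using that(3)
      by (intro companion_system_deflate[OF p q_monic] deriv[OF that(1,2)]) auto
  qed (use that deg_q in auto)
  define f where "f = (if n = 0 then y else v 0)"
  have f: "(f \<longlongrightarrow> Y / coeff q 0) at_top"
    using y v[of 0] q_monic deg_q by (cases "n = 0") (auto simp: f_def)
  have "(w 0 \<longlongrightarrow> - (Y / coeff q 0) / \<kappa>) at_top"
  proof (rule first_order_stable_tendsto[OF \<kappa> E cont _ f])
    show "(w 0 has_vector_derivative \<kappa> * w 0 t + f t) (at t)" if "0 < t" "t \<notin> E" for t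
      using deriv[OF that, of 0] companion_rhs_deflate_0[OF p q_monic] Suc.hyps(2) deg_q
      by (cases "n = 0") (simp_all add: f_def v_def)
  qed (use Suc.hyps(2) in simp)
  then have w0: "(w 0 \<longlongrightarrow> Y / coeff p 0) at_top"
    using \<kappa> by (simp add: coeff_p0 field_simps)
  show ?case
    using Suc.prems(6)
  proof (induction l)
    case (Suc l)
    have "w (Suc l) = (\<lambda>t. v l t + \<kappa> * w l t)" by (simp add: v_def[abs_def])
    moreover have "((\<lambda>t. v l t + \<kappa> * w l t) \<longlongrightarrow>
        (if l = 0 then Y / coeff q 0 else 0) + \<kappa> * (if l = 0 then Y / coeff p 0 else 0)) at_top"
      using Suc v Suc.hyps(2) by (intro tendsto_intros) auto
    moreover have "(if l = 0 then Y / coeff q 0 else 0) + \<kappa> * (if l = 0 then Y / coeff p 0 else 0) = 0"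
      using \<kappa> coeff_q0 by (auto simp: coeff_p0)
    ultimately show ?case by simp
  qed (use w0 in simp)
qed

section \<open>Dwell-time switching signals\<close>

locale dwell_time_switching =
  fixes \<tau>D :: real and \<sigma> :: "real \<Rightarrow> 'k" and ts :: "nat \<Rightarrow> real"
  assumes dwell_pos: "\<tau>D > 0" and dwell: "dwell_switching \<tau>D \<sigma> ts"
begin

lemma ts_0: "ts 0 = 0"
  and ts_Suc_ge: "ts n + \<tau>D \<le> ts (Suc n)"
  and sigma_const: "ts n \<le> t \<Longrightarrow> t < ts (Suc n) \<Longrightarrow> \<sigma> t = \<sigma> (ts n)"
  using dwell unfolding dwell_switching_def by (auto simp: algebra_simps)

lemma ts_ge: "real n * \<tau>D \<le> ts n"
proof (induction n)
  case (Suc n)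
  then show ?case using ts_Suc_ge[of n] by (simp add: algebra_simps)
qed (simp add: ts_0)

lemma ts_mono: "n \<le> n' \<Longrightarrow> ts n \<le> ts n'"
proof (induction n' rule: dec_induct)
  case (step k)
  then show ?case using ts_Suc_ge[of k] dwell_pos by simp
qed simp

lemma ts_nonneg: "0 \<le> ts n"
  using ts_mono[of 0 n] ts_0 by simp

lemma finite_switching_times: "finite (range ts \<inter> {..b})"
proof (rule finite_subset)
  show "range ts \<inter> {..b} \<subseteq> ts ` {..nat \<lceil>b / \<tau>D\<rceil>}"
  proof clarify
    fix n assume "ts n \<le> b"
    then have "real n \<le> b / \<tau>D"
      using ts_ge[of n] dwell_pos by (simp add: pos_le_divide_eq)
    then have "n \<le> nat \<lceil>b / \<tau>D\<rceil>" by linarith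
    then show "ts n \<in> ts ` {..nat \<lceil>b / \<tau>D\<rceil>}" by simp
  qed
qed simp

lemma switching_interval:
  assumes "0 \<le> t" obtains n where "ts n \<le> t" "t < ts (Suc n)"
proof -
  define k where "k = Suc (nat \<lceil>t / \<tau>D\<rceil>)"
  have "t / \<tau>D < real k" unfolding k_def by linarith
  then have "t < ts k"
    using ts_ge[of k] dwell_pos by (simp add: divide_less_eq)
  then have ex: "\<exists>k. t < ts k" by blast
  define j where "j = (LEAST k. t < ts k)"
  have j: "t < ts j" unfolding j_def by (rule LeastI_ex[OF ex])
  then obtain n where n: "j = Suc n" using ts_0 assms by (cases j) auto
  have "\<not> t < ts n" using not_less_Least[of n "\<lambda>k. t < ts k"] n j_def by simp
  then show ?thesis using that j n by (simp add: not_less)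
qed

lemma not_switching_time:
  assumes "ts n < s" "s < ts (Suc n)" shows "s \<notin> range ts"
proof
  assume "s \<in> range ts"
  then obtain k where "s = ts k" by auto
  then show False
    using ts_mono[of k n] ts_mono[of "Suc n" k] assms by (cases "k \<le> n") auto
qed

end

lemma nonneg_small_decrement:
  fixes f :: "real \<Rightarrow> real"
  assumes "\<And>t. 0 \<le> t \<Longrightarrow> 0 \<le> f t" "h > 0" "d > 0"
  shows "\<exists>t\<ge>0. f t - f (t + h) < d"
proof (rule ccontr)
  assume "\<not> ?thesis"
  then have step: "d \<le> f t - f (t + h)" if "0 \<le> t" for t
    using that by (simp add: not_less)
  have decay: "f (real k * h) \<le> f 0 - real k * d" for k :: nat
  proof (induction k)
    case (Suc k)
    then show ?case using step[of "real k * h"] \<open>h > 0\<close> by (simp add: algebra_simps)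
  qed simp
  obtain k :: nat where "f 0 / d < real k" using reals_Archimedean2 by blast
  then have "f 0 < real k * d" using \<open>d > 0\<close> by (simp add: divide_less_eq)
  then show False using decay[of k] assms(1)[of "real k * h"] \<open>h > 0\<close> by simp
qed

lemma abs_mult_le_young:
  fixes A d c :: real
  assumes "0 \<le> A" "A \<le> amax" "c > 0"
  shows "\<bar>A * d\<bar> \<le> c / 2 + amax / (2 * c) * (A * d\<^sup>2)"
proof -
  define z where "z = A * \<bar>d\<bar>"
  have "0 \<le> (z - c)\<^sup>2 / (2 * c)" using assms by simp
  also have "\<dots> = c / 2 + z\<^sup>2 / (2 * c) - z"
    using assms by (simp add: power2_eq_square field_simps)
  finally have young: "z \<le> c / 2 + z\<^sup>2 / (2 * c)" by simp
  have "z\<^sup>2 = A * (A * d\<^sup>2)"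
    by (simp add: z_def power_mult_distrib power2_eq_square)
  also have "\<dots> \<le> amax * (A * d\<^sup>2)"
    using assms by (intro mult_right_mono) auto
  finally have "z\<^sup>2 / (2 * c) \<le> amax / (2 * c) * (A * d\<^sup>2)"
    using assms by (simp add: divide_right_mono)
  moreover have "\<bar>A * d\<bar> = z" using assms by (simp add: z_def abs_mult)
  ultimately show ?thesis using young by linarith
qed

lemma relpow_variation_bound:
  fixes v :: "nat \<Rightarrow> real"
  assumes "\<forall>(j, i)\<in>R. \<bar>v i - v j\<bar> < e"
  shows "(r, w) \<in> R ^^ n \<Longrightarrow> \<bar>v w - v r\<bar> \<le> real n * e"
proof (induction n arbitrary: w)
  case (Suc n)
  then obtain z where "(r, z) \<in> R ^^ n" "(z, w) \<in> R" by auto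
  then show ?case using Suc.IH assms by (fastforce simp: algebra_simps)
qed simp

lemma rtrancl_variation_bound:
  fixes v :: "nat \<Rightarrow> real"
  assumes "R \<subseteq> {..<N} \<times> {..<N}" "\<forall>(j, i)\<in>R. \<bar>v i - v j\<bar> < e" "0 \<le> e" "(r, w) \<in> R\<^sup>*"
  shows "\<bar>v w - v r\<bar> \<le> real N ^ 2 * e"
proof -
  have fin: "finite R" using assms(1) by (rule finite_subset) auto
  obtain n where n: "n \<le> card R" "(r, w) \<in> R ^^ n"
    using assms(4) rtrancl_finite_eq_relpow[OF fin] by auto
  have "card R \<le> N * N"
    using card_mono[OF _ assms(1)] by (simp add: card_cartesian_product)
  then have "real n \<le> real N ^ 2"
    using n(1) by (simp add: power2_eq_square flip: of_nat_mult)
  then have "real n * e \<le> real N ^ 2 * e" using assms(3) by (rule mult_right_mono)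
  then show ?thesis using relpow_variation_bound[OF assms(2) n(2)] by linarith
qed

lemma sum_weighted_differences_eq_0:
  fixes A :: "nat \<Rightarrow> nat \<Rightarrow> real"
  assumes "\<forall>j<N. (\<Sum>l<N. A j l) = (\<Sum>i<N. A i j)"
  shows "(\<Sum>i<N. \<Sum>j<N. A i j * (v i - v j)) = 0"
proof -
  have "(\<Sum>i<N. \<Sum>j<N. A i j * (v i - v j))
      = (\<Sum>i<N. (\<Sum>j<N. A i j) * v i) - (\<Sum>i<N. \<Sum>j<N. A i j * v j)"
    by (simp add: algebra_simps sum_subtractf sum_distrib_right sum_distrib_left)
  also have "(\<Sum>i<N. \<Sum>j<N. A i j * v j) = (\<Sum>j<N. (\<Sum>i<N. A i j) * v j)"
    by (subst sum.swap) (simp add: sum_distrib_right)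
  also have "\<dots> = (\<Sum>j<N. (\<Sum>l<N. A j l) * v j)" using assms by simp
  finally show ?thesis by simp
qed

lemma sum_deviation_weighted_differences:
  fixes A :: "nat \<Rightarrow> nat \<Rightarrow> real"
  assumes bal: "\<forall>j<N. (\<Sum>l<N. A j l) = (\<Sum>i<N. A i j)"
  shows "(\<Sum>i<N. (v i - c) * (\<Sum>j<N. A i j * (v i - v j)))
       = (\<Sum>i<N. \<Sum>j<N. A i j * (v i - v j)\<^sup>2) / 2"
proof -
  define P where "P = (\<Sum>i<N. \<Sum>j<N. A i j * (v i * (v i - v j)))"
  define Q where "Q = (\<Sum>i<N. \<Sum>j<N. A i j * (v j * (v i - v j)))"
  have sq: "(\<Sum>i<N. \<Sum>j<N. A i j * (v i - v j)\<^sup>2) = P - Q"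
    unfolding P_def Q_def sum_subtractf[symmetric]
    by (intro sum.cong refl) (simp add: power2_eq_square algebra_simps)
  \<comment> \<open>\<open>P + Q\<close> is the weighted sum of differences of \<open>v\<^sup>2\<close>\<close>
  have "P + Q = 0"
    using sum_weighted_differences_eq_0[OF bal, of "\<lambda>i. (v i)\<^sup>2"]
    unfolding P_def Q_def sum.distrib[symmetric]
    by (simp add: power2_eq_square algebra_simps)
  moreover have "(\<Sum>i<N. (v i - c) * (\<Sum>j<N. A i j * (v i - v j)))
      = P - c * (\<Sum>i<N. \<Sum>j<N. A i j * (v i - v j))"
    unfolding P_def left_diff_distrib sum_subtractf sum_distrib_left
    by (simp add: mult.left_commute)
  ultimately show ?thesis
    using sq sum_weighted_differences_eq_0[OF bal, of v] by simp
qed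

section \<open>Consensus of the outputs\<close>

locale switched_network = dwell_time_switching \<tau>D \<sigma> ts
  for \<tau>D :: real and \<sigma> :: "real \<Rightarrow> 'k" and ts :: "nat \<Rightarrow> real" +
  fixes N m :: nat and a :: "nat \<Rightarrow> real" and S :: "'k set"
    and \<alpha> :: "'k \<Rightarrow> nat \<Rightarrow> nat \<Rightarrow> real" and x :: "nat \<Rightarrow> real \<Rightarrow> nat \<Rightarrow> real"
  assumes m2: "m \<ge> 2"
    and finite_S: "finite S"
    and weights_nonneg: "\<forall>k\<in>S. \<forall>i j. \<alpha> k i j \<ge> 0"
    and no_loops: "\<forall>k\<in>S. \<forall>i. \<alpha> k i i = 0"
    and sigma_in: "\<forall>t\<ge>0. \<sigma> t \<in> S"
    and bal: "\<forall>k\<in>S. balanced N \<alpha> k"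
    and cont: "\<forall>i<N. \<forall>l<m. continuous_on {0..} (\<lambda>t. x i t l)"
    and ode: "\<forall>n t. ts n < t \<and> t < ts (Suc n) \<longrightarrow>
               (\<forall>i<N. \<forall>l<m. ((\<lambda>s. x i s l) has_real_derivative
                   closed_loop N m a \<alpha> (\<sigma> t) (\<lambda>j. x j t) i l) (at t))"
begin

lemma sigma_in_S: "0 \<le> t \<Longrightarrow> \<sigma> t \<in> S"
  using sigma_in by auto

lemma state_deriv:
  assumes "0 < t" "t \<notin> range ts" "i < N" "l < m"
  shows "((\<lambda>s. x i s l) has_real_derivative closed_loop N m a \<alpha> (\<sigma> t) (\<lambda>j. x j t) i l) (at t)"
proof -
  obtain n where n: "ts n \<le> t" "t < ts (Suc n)"
    using switching_interval[of t] assms(1) by force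
  moreover have "ts n \<noteq> t" using assms(2) by auto
  ultimately have "ts n < t" by simp
  then show ?thesis using ode n assms(3,4) by blast
qed

lemma sum_over_neighbors:
  assumes "k \<in> S"
  shows "(\<Sum>j\<in>{j. j < N \<and> \<alpha> k i j > 0}. \<alpha> k i j * f j) = (\<Sum>j<N. \<alpha> k i j * f j)"
proof -
  have "\<alpha> k i j = 0" if "j < N" "\<not> \<alpha> k i j > 0" for j
    using weights_nonneg assms that by (meson antisym not_less)
  then show ?thesis by (intro sum.mono_neutral_left) auto
qed

lemma balanced_degrees:
  assumes "k \<in> S" shows "\<forall>j<N. (\<Sum>l<N. \<alpha> k j l) = (\<Sum>i<N. \<alpha> k i j)"
proof (intro allI impI)
  fix j assume j: "j < N"
  have "0 = (\<Sum>i<N. laplacian N \<alpha> k i j)"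
    using bal assms j unfolding balanced_def by auto
  also have "\<dots> = laplacian N \<alpha> k j j + (\<Sum>i\<in>{..<N} - {j}. laplacian N \<alpha> k i j)"
    using j by (subst sum.remove[of _ j]) auto
  also have "(\<Sum>i\<in>{..<N} - {j}. laplacian N \<alpha> k i j) = - ((\<Sum>i<N. \<alpha> k i j) - \<alpha> k j j)"
    using j by (simp add: laplacian_def sum_negf sum_diff1)
  also have "laplacian N \<alpha> k j j = (\<Sum>l<N. \<alpha> k j l)"
    using sum_over_neighbors[OF assms, of j "\<lambda>_. 1"] by (simp add: laplacian_def)
  finally show "(\<Sum>l<N. \<alpha> k j l) = (\<Sum>i<N. \<alpha> k i j)" using no_loops assms by simp
qed

lemma K2_closed_loop:
  assumes "k \<in> S"
  shows "rowmul m (K2 m a) (closed_loop N m a \<alpha> k X i)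
       = - (\<Sum>j<N. \<alpha> k i j * (rowmul m (K2 m a) (X i) - rowmul m (K2 m a) (X j)))"
proof -
  obtain n where m: "m = Suc n" using m2 by (cases m) auto
  have K1: "rowmul m (K1 m a) (X i) = - (\<Sum>l<n. a (l + 1) * X i (l + 1))"
    unfolding rowmul_def m by (subst sum.lessThan_Suc_shift) (simp add: K1_def sum_negf)
  have diff: "rowmul m (K2 m a) (\<lambda>l. X i l - X j l) = rowmul m (K2 m a) (X i) - rowmul m (K2 m a) (X j)" for j
    by (simp add: rowmul_def algebra_simps sum_subtractf)
  have "rowmul m (K2 m a) (closed_loop N m a \<alpha> k X i)
      = (\<Sum>l<n. a (l + 1) * X i (l + 1)) + protocol N m a \<alpha> k X i"
    unfolding rowmul_def closed_loop_def m
    by (simp add: K2_def Amul_def Bmul_def algebra_simps sum.distrib)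
  then show ?thesis
    unfolding protocol_def K1 sum_over_neighbors[OF assms] diff by simp
qed

definition y :: "nat \<Rightarrow> real \<Rightarrow> real" where
  "y i t = rowmul m (K2 m a) (x i t)"

definition y_avg :: real where
  "y_avg = (\<Sum>j<N. y j 0) / N"

definition disagreement :: "real \<Rightarrow> real" where
  "disagreement t = (\<Sum>i<N. (y i t - y_avg)\<^sup>2)"

definition dissipation :: "real \<Rightarrow> real" where
  "dissipation t = (\<Sum>i<N. \<Sum>j<N. \<alpha> (\<sigma> t) i j * (y i t - y j t)\<^sup>2)"

lemma y_continuous: "i < N \<Longrightarrow> continuous_on {0..} (y i)"
  unfolding y_def[abs_def] rowmul_def using cont by (auto intro!: continuous_intros)

lemma y_deriv:
  assumes "0 < t" "t \<notin> range ts" "i < N"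
  shows "(y i has_real_derivative
           - (\<Sum>j<N. \<alpha> (\<sigma> t) i j * (y i t - y j t))) (at t)"
proof -
  have "((\<lambda>s. \<Sum>l<m. K2 m a l * x i s l) has_real_derivative
      (\<Sum>l<m. K2 m a l * closed_loop N m a \<alpha> (\<sigma> t) (\<lambda>j. x j t) i l)) (at t)"
    by (intro DERIV_sum DERIV_cmult state_deriv assms) auto
  then show ?thesis
    using K2_closed_loop[OF sigma_in_S, of t "\<lambda>j. x j t" i] assms(1)
    unfolding y_def[abs_def] rowmul_def by simp
qed

lemma y_sum_const:
  assumes "0 \<le> t" shows "(\<Sum>i<N. y i t) = (\<Sum>i<N. y i 0)"
proof -
  have deriv: "((\<lambda>s. \<Sum>i<N. y i s) has_real_derivative 0) (at s)"
    if "0 < s" "s \<notin> range ts" for s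
  proof -
    have "(\<Sum>i<N. - (\<Sum>j<N. \<alpha> (\<sigma> s) i j * (y i s - y j s))) = 0"
      using sum_weighted_differences_eq_0[OF balanced_degrees[OF sigma_in_S]] that
      by (simp add: sum_negf)
    moreover have "((\<lambda>s. \<Sum>i<N. y i s) has_real_derivative
        (\<Sum>i<N. - (\<Sum>j<N. \<alpha> (\<sigma> s) i j * (y i s - y j s)))) (at s)"
      by (intro DERIV_sum y_deriv that) auto
    ultimately show ?thesis by simp
  qed
  have cont: "continuous_on {0..t} (\<lambda>s. \<Sum>i<N. y i s)"
    by (intro continuous_intros continuous_on_subset[OF y_continuous]) auto
  have "(\<Sum>i<N. y i t) \<le> (\<Sum>i<N. y i 0)"
    by (rule DERIV_nonpos_imp_le_off_finite[OF assms finite_switching_times[of t] cont])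
       (use deriv in auto)
  moreover have "- (\<Sum>i<N. y i t) \<le> - (\<Sum>i<N. y i 0)"
    by (rule DERIV_nonpos_imp_le_off_finite[OF assms finite_switching_times[of t]
          continuous_on_minus[OF cont]]) (use deriv DERIV_minus in fastforce)+
  ultimately show ?thesis by simp
qed

lemma disagreement_deriv:
  assumes "0 < t" "t \<notin> range ts"
  shows "(disagreement has_real_derivative - dissipation t) (at t)"
proof -
  define X where "X i = (\<Sum>j<N. \<alpha> (\<sigma> t) i j * (y i t - y j t))" for i
  have "(disagreement has_real_derivative (\<Sum>i<N. 2 * (y i t - y_avg) * - X i)) (at t)"
    unfolding disagreement_def[abs_def] X_def
    by (intro DERIV_sum) (auto intro!: derivative_eq_intros y_deriv assms)
  moreover have "(\<Sum>i<N. 2 * (y i t - y_avg) * - X i)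
      = - 2 * (\<Sum>i<N. (y i t - y_avg) * X i)"
    unfolding sum_distrib_left by (intro sum.cong refl) (simp add: algebra_simps)
  also have "(\<Sum>i<N. (y i t - y_avg) * X i) = dissipation t / 2"
    using sum_deviation_weighted_differences[OF balanced_degrees[OF sigma_in_S]] assms
    unfolding dissipation_def X_def by simp
  ultimately show ?thesis by simp
qed

lemma dissipation_ge_row:
  assumes "0 \<le> t" "i < N"
  shows "(\<Sum>j<N. \<alpha> (\<sigma> t) i j * (y i t - y j t)\<^sup>2) \<le> dissipation t"
  unfolding dissipation_def using weights_nonneg sigma_in_S[OF assms(1)] assms(2)
  by (intro member_le_sum sum_nonneg) auto

lemma dissipation_ge_term:
  assumes "0 \<le> t" "i < N" "j < N"
  shows "\<alpha> (\<sigma> t) i j * (y i t - y j t)\<^sup>2 \<le> dissipation t"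
proof -
  have "\<alpha> (\<sigma> t) i j * (y i t - y j t)\<^sup>2
      \<le> (\<Sum>j<N. \<alpha> (\<sigma> t) i j * (y i t - y j t)\<^sup>2)"
    using weights_nonneg sigma_in_S[OF assms(1)] assms(3) by (intro member_le_sum) auto
  then show ?thesis using dissipation_ge_row[OF assms(1,2)] by linarith
qed

lemma dissipation_nonneg: "0 \<le> t \<Longrightarrow> 0 \<le> dissipation t"
  unfolding dissipation_def using weights_nonneg sigma_in_S by (auto intro!: sum_nonneg)

lemma disagreement_nonneg: "0 \<le> disagreement t"
  unfolding disagreement_def by (auto intro!: sum_nonneg)

lemma disagreement_antimono:
  assumes "0 \<le> s" "s \<le> t" shows "disagreement t \<le> disagreement s"
proof (rule DERIV_nonpos_imp_le_off_finite[OF assms(2) finite_switching_times[of t]])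
  show "continuous_on {s..t} disagreement"
    unfolding disagreement_def[abs_def] using assms(1)
    by (intro continuous_intros continuous_on_subset[OF y_continuous]) auto
  fix u assume "u \<in> {s<..<t} - range ts \<inter> {..t}"
  then show "(disagreement has_real_derivative - dissipation u) (at u)" "- dissipation u \<le> 0"
    using disagreement_deriv dissipation_nonneg[of u] assms by auto
qed

lemma weight_bounds:
  obtains amin amax where "amin > 0" "amax > 0"
    "\<forall>k\<in>S. \<forall>i<N. \<forall>j<N. \<alpha> k i j \<le> amax \<and> (\<alpha> k i j > 0 \<longrightarrow> amin \<le> \<alpha> k i j)"
proof -
  define W where "W = (\<lambda>(k, i, j). \<alpha> k i j) ` (S \<times> {..<N} \<times> {..<N})"
  have fin: "finite W" unfolding W_def using finite_S by auto
  define amax where "amax = Max (insert 1 W)"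
  define amin where "amin = Min (insert 1 {w\<in>W. w > 0})"
  have "\<alpha> k i j \<in> W" if "k \<in> S" "i < N" "j < N" for k i j
    unfolding W_def using that by force
  then have "\<forall>k\<in>S. \<forall>i<N. \<forall>j<N. \<alpha> k i j \<le> amax \<and> (\<alpha> k i j > 0 \<longrightarrow> amin \<le> \<alpha> k i j)"
    unfolding amax_def amin_def using fin by (auto intro!: Max_ge Min_le)
  moreover have "amax \<ge> 1" "amin > 0"
    unfolding amax_def amin_def using fin by (auto simp: Min_gr_iff)
  ultimately show ?thesis by (intro that[of amin amax]) auto
qed

lemma y_deriv_bound:
  assumes "0 \<le> t" "i < N" "\<beta> > 0" and amax: "\<forall>k\<in>S. \<forall>i<N. \<forall>j<N. \<alpha> k i j \<le> amax"
  shows "\<bar>\<Sum>j<N. \<alpha> (\<sigma> t) i j * (y i t - y j t)\<bar> \<le> \<beta> / 2 + real N * amax / (2 * \<beta>) * dissipation t"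
proof -
  define c where "c = \<beta> / real N"
  have c: "c > 0" using assms by (simp add: c_def)
  have "0 \<le> amax"
    using amax weights_nonneg sigma_in_S[OF assms(1)] assms(2) by (meson order_trans)
  then have K: "amax / (2 * c) = real N * amax / (2 * \<beta>)" "0 \<le> real N * amax / (2 * \<beta>)"
    using assms(3) c by (simp_all add: c_def)
  have "\<bar>\<Sum>j<N. \<alpha> (\<sigma> t) i j * (y i t - y j t)\<bar> \<le> (\<Sum>j<N. \<bar>\<alpha> (\<sigma> t) i j * (y i t - y j t)\<bar>)"
    by (rule sum_abs)
  also have "\<dots> \<le> (\<Sum>j<N. c / 2 + amax / (2 * c) * (\<alpha> (\<sigma> t) i j * (y i t - y j t)\<^sup>2))"
    using weights_nonneg sigma_in_S[OF assms(1)] amax assms(2) c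
    by (intro sum_mono abs_mult_le_young) auto
  also have "\<dots> = \<beta> / 2 + real N * amax / (2 * \<beta>) * (\<Sum>j<N. \<alpha> (\<sigma> t) i j * (y i t - y j t)\<^sup>2)"
    using assms(2) by (simp only: sum.distrib sum_distrib_left K(1)) (simp add: c_def)
  also have "\<dots> \<le> \<beta> / 2 + real N * amax / (2 * \<beta>) * dissipation t"
    using dissipation_ge_row[OF assms(1,2)] K(2) by (intro add_left_mono mult_left_mono)
  finally show ?thesis .
qed

text \<open>A fast change of \<open>y\<^sub>i\<close> costs dissipation, hence a drop of the disagreement.\<close>
lemma y_variation_le:
  assumes "0 \<le> t1" "t1 \<le> t2" "i < N" "\<beta> > 0" and amax: "\<forall>k\<in>S. \<forall>i<N. \<forall>j<N. \<alpha> k i j \<le> amax"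
  shows "\<bar>y i t2 - y i t1\<bar>
     \<le> \<beta> / 2 * (t2 - t1) + real N * amax / (2 * \<beta>) * (disagreement t1 - disagreement t2)"
proof -
  define K where "K = real N * amax / (2 * \<beta>)"
  define r where "r s = - (\<Sum>j<N. \<alpha> (\<sigma> s) i j * (y i s - y j s))" for s
  have signed: "sg * y i t2 - \<beta> / 2 * t2 + K * disagreement t2
      \<le> sg * y i t1 - \<beta> / 2 * t1 + K * disagreement t1" if sg: "\<bar>sg\<bar> = 1" for sg :: real
  proof (rule DERIV_nonpos_imp_le_off_finite[OF assms(2) finite_switching_times[of t2]])
    show "continuous_on {t1..t2} (\<lambda>s. sg * y i s - \<beta> / 2 * s + K * disagreement s)"
      unfolding disagreement_def[abs_def] using assms(1,3)
      by (intro continuous_intros continuous_on_subset[OF y_continuous]) auto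
    fix s assume "s \<in> {t1<..<t2} - range ts \<inter> {..t2}"
    then have s: "0 < s" "s \<notin> range ts" using assms(1) by auto
    show "((\<lambda>s. sg * y i s - \<beta> / 2 * s + K * disagreement s) has_real_derivative
        sg * r s - \<beta> / 2 * 1 + K * - dissipation s) (at s)"
      unfolding r_def
      by (intro DERIV_add DERIV_diff DERIV_cmult y_deriv disagreement_deriv s assms(3) DERIV_ident)
    have "sg * r s \<le> \<bar>sg * r s\<bar>" by simp
    also have "\<dots> = \<bar>r s\<bar>" using sg by (simp add: abs_mult)
    also have "\<dots> \<le> \<beta> / 2 + K * dissipation s"
      unfolding r_def K_def abs_minus_cancel using s assms(3,4) amax by (intro y_deriv_bound) auto
    finally show "sg * r s - \<beta> / 2 * 1 + K * - dissipation s \<le> 0" by simp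
  qed
  have "y i t2 - y i t1 \<le> \<beta> / 2 * (t2 - t1) + K * (disagreement t1 - disagreement t2)"
    using signed[of 1] by (simp add: algebra_simps diff_divide_distrib)
  moreover have "y i t1 - y i t2 \<le> \<beta> / 2 * (t2 - t1) + K * (disagreement t1 - disagreement t2)"
    using signed[of "-1"] by (simp add: algebra_simps diff_divide_distrib)
  ultimately show ?thesis unfolding K_def by linarith
qed

lemma y_variation:
  assumes "0 \<le> t1" "0 \<le> t2" "i < N" "\<beta> > 0" and amax: "\<forall>k\<in>S. \<forall>i<N. \<forall>j<N. \<alpha> k i j \<le> amax"
  shows "\<bar>y i t2 - y i t1\<bar>
     \<le> \<beta> / 2 * \<bar>t2 - t1\<bar> + real N * amax / (2 * \<beta>) * \<bar>disagreement t1 - disagreement t2\<bar>"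
proof (cases "t1 \<le> t2")
  case True
  then show ?thesis
    using y_variation_le[OF assms(1) True assms(3-5)] disagreement_antimono[OF assms(1) True] by simp
next
  case False
  then show ?thesis
    using y_variation_le[OF assms(2) _ assms(3-5), of t1] disagreement_antimono[OF assms(2), of t1]
    by (simp add: abs_minus_commute)
qed

lemma disagreement_drop:
  assumes "ts n \<le> p" "p + \<tau>D \<le> ts (Suc n)" "i < N" "j < N"
    and "amin \<le> \<alpha> (\<sigma> (ts n)) i j" "0 \<le> c"
    and far: "\<forall>q\<in>{p..p+\<tau>D}. c \<le> \<bar>y i q - y j q\<bar>"
  shows "disagreement (p + \<tau>D) \<le> disagreement p - amin * c\<^sup>2 * \<tau>D"
proof -
  have p: "0 \<le> p" using ts_nonneg[of n] assms(1) by simp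
  have "disagreement (p + \<tau>D) + amin * c\<^sup>2 * (p + \<tau>D) \<le> disagreement p + amin * c\<^sup>2 * p"
  proof (rule DERIV_nonpos_imp_le_off_finite[where F = "{}"
        and g = "\<lambda>s. disagreement s + amin * c\<^sup>2 * s" and g' = "\<lambda>s. - dissipation s + amin * c\<^sup>2 * 1"])
    show "continuous_on {p..p + \<tau>D} (\<lambda>s. disagreement s + amin * c\<^sup>2 * s)"
      unfolding disagreement_def[abs_def] using p
      by (intro continuous_intros continuous_on_subset[OF y_continuous]) auto
    fix s assume "s \<in> {p<..<p + \<tau>D} - {}"
    then have s: "p < s" "s < p + \<tau>D" by auto
    then have sn: "ts n < s" "s < ts (Suc n)" using assms(1,2) by auto
    then have s0: "0 < s" "s \<notin> range ts" using ts_nonneg[of n] not_switching_time by auto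
    show "((\<lambda>s. disagreement s + amin * c\<^sup>2 * s) has_real_derivative
        - dissipation s + amin * c\<^sup>2 * 1) (at s)"
      by (intro DERIV_add DERIV_cmult disagreement_deriv s0 DERIV_ident)
    have "c\<^sup>2 \<le> (y i s - y j s)\<^sup>2"
      using far s assms(6) by (metis atLeastAtMost_iff less_imp_le power2_abs power_mono)
    moreover have "amin \<le> \<alpha> (\<sigma> s) i j" "0 \<le> \<alpha> (\<sigma> s) i j"
      using assms(5) sigma_const[of n s] sn weights_nonneg sigma_in_S[of s] s0 by auto
    ultimately have "amin * c\<^sup>2 \<le> \<alpha> (\<sigma> s) i j * (y i s - y j s)\<^sup>2"
      by (meson mult_mono zero_le_power2 order_trans)
    then show "- dissipation s + amin * c\<^sup>2 * 1 \<le> 0"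
      using dissipation_ge_term[of s i j] s0 assms(3,4) by simp
  qed (use dwell_pos in auto)
  then show ?thesis by (simp add: algebra_simps)
qed

text \<open>An edge of the union graph is active on a dwell interval inside the window; if its ends stayed
  \<open>c\<close>-apart throughout, the disagreement would drop by at least \<open>amin c\<^sup>2 \<tau>D\<close>.\<close>
lemma union_edge_agrees_in_window:
  assumes amin: "\<forall>k\<in>S. \<forall>i<N. \<forall>j<N. \<alpha> k i j > 0 \<longrightarrow> amin \<le> \<alpha> k i j"
    and edge: "(j, i) \<in> union_edges N \<alpha> \<sigma> t T" and "\<tau>D \<le> t" "0 \<le> c"
    and small: "disagreement (t - \<tau>D) - disagreement (t + T + \<tau>D) < amin * c\<^sup>2 * \<tau>D"
  obtains q where "t - \<tau>D \<le> q" "q \<le> t + T + \<tau>D" "\<bar>y i q - y j q\<bar> < c"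
proof -
  obtain s where ij: "i < N" "j < N" and s: "t \<le> s" "s < t + T" and active: "\<alpha> (\<sigma> s) i j > 0"
    using edge unfolding union_edges_def by auto
  obtain n where n: "ts n \<le> s" "s < ts (Suc n)"
    using switching_interval[of s] s assms(3) dwell_pos by force
  define p where "p = max (ts n) (s - \<tau>D)"
  have p: "ts n \<le> p" "p + \<tau>D \<le> ts (Suc n)" "t - \<tau>D \<le> p" "p \<le> s"
    using ts_Suc_ge[of n] n s dwell_pos by (auto simp: p_def)
  have "amin \<le> \<alpha> (\<sigma> (ts n)) i j"
    using amin active sigma_const[OF n] sigma_in_S[OF ts_nonneg[of n]] ij by auto
  then have "\<not> (\<forall>q\<in>{p..p+\<tau>D}. c \<le> \<bar>y i q - y j q\<bar>)"
  proof (intro notI)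
    assume "\<forall>q\<in>{p..p+\<tau>D}. c \<le> \<bar>y i q - y j q\<bar>"
    then have "disagreement (p + \<tau>D) \<le> disagreement p - amin * c\<^sup>2 * \<tau>D"
      using disagreement_drop[OF p(1,2) ij] \<open>amin \<le> _\<close> \<open>0 \<le> c\<close> by blast
    moreover have "disagreement p \<le> disagreement (t - \<tau>D)"
      "disagreement (t + T + \<tau>D) \<le> disagreement (p + \<tau>D)"
      using disagreement_antimono[of "t - \<tau>D" p] disagreement_antimono[of "p + \<tau>D" "t + T + \<tau>D"]
        p s assms(3) dwell_pos by auto
    ultimately show False using small by linarith
  qed
  then obtain q where "p \<le> q" "q \<le> p + \<tau>D" "\<bar>y i q - y j q\<bar> < c" by (auto simp: not_le)
  then show ?thesis using p s by (intro that[of q]) auto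
qed

lemma union_edge_close:
  assumes bounds: "\<forall>k\<in>S. \<forall>i<N. \<forall>j<N. \<alpha> k i j \<le> amax \<and> (\<alpha> k i j > 0 \<longrightarrow> amin \<le> \<alpha> k i j)"
    and edge: "(j, i) \<in> union_edges N \<alpha> \<sigma> t T" and "\<tau>D \<le> t" "0 \<le> c" "\<beta> > 0"
    and small: "disagreement (t - \<tau>D) - disagreement (t + T + \<tau>D) < amin * c\<^sup>2 * \<tau>D"
  shows "\<bar>y i t - y j t\<bar>
     < c + \<beta> * (T + \<tau>D) + real N * amax / \<beta> * (disagreement (t - \<tau>D) - disagreement (t + T + \<tau>D))"
proof -
  define \<Delta> where "\<Delta> = disagreement (t - \<tau>D) - disagreement (t + T + \<tau>D)"
  define K where "K = real N * amax / (2 * \<beta>)"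
  define A where "A = \<beta> / 2 * (T + \<tau>D) + K * \<Delta>"
  obtain q where q: "t - \<tau>D \<le> q" "q \<le> t + T + \<tau>D" and close: "\<bar>y i q - y j q\<bar> < c"
    using union_edge_agrees_in_window[OF _ edge assms(3,4) small] bounds by blast
  have ij: "i < N" "j < N" and T: "0 < T" using edge unfolding union_edges_def by auto
  have t: "0 \<le> t - \<tau>D" "0 \<le> t" "0 \<le> q" using assms(3) q dwell_pos by auto
  have "0 \<le> amax"
    using bounds weights_nonneg sigma_in_S[OF t(2)] ij by (meson order_trans)
  then have K: "0 \<le> K" using assms(5) by (simp add: K_def)
  have window: "disagreement (t + T + \<tau>D) \<le> disagreement u \<and> disagreement u \<le> disagreement (t - \<tau>D)"
    if "t - \<tau>D \<le> u" "u \<le> t + T + \<tau>D" for u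
    using disagreement_antimono that t by auto
  have "\<bar>disagreement q - disagreement t\<bar> \<le> \<Delta>"
    using window[OF q] window[of t] T dwell_pos unfolding \<Delta>_def by (simp add: abs_le_iff)
  moreover have "\<bar>t - q\<bar> \<le> T + \<tau>D" using q T by auto
  ultimately have var: "\<bar>y k t - y k q\<bar> \<le> A" if "k < N" for k
  proof -
    assume "\<bar>disagreement q - disagreement t\<bar> \<le> \<Delta>" "\<bar>t - q\<bar> \<le> T + \<tau>D"
    then have "\<beta> / 2 * \<bar>t - q\<bar> + K * \<bar>disagreement q - disagreement t\<bar> \<le> A"
      using K assms(5) unfolding A_def by (intro add_mono mult_left_mono) auto
    then show ?thesis
      using y_variation[OF t(3,2) that assms(5), of amax] bounds unfolding K_def by fastforce
  qed
  have "\<bar>y i t - y j t\<bar> < c + 2 * A"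
    using close var[OF ij(1)] var[OF ij(2)] by linarith
  also have "2 * A = \<beta> * (T + \<tau>D) + real N * amax / \<beta> * \<Delta>"
    using assms(5) by (simp add: A_def K_def field_simps)
  finally show ?thesis unfolding \<Delta>_def by simp
qed

lemma disagreement_le_spread:
  assumes "0 \<le> t" "r < N" and spread: "\<forall>i<N. \<bar>y i t - y r t\<bar> \<le> d"
  shows "disagreement t \<le> real N * (2 * d)\<^sup>2"
proof -
  have avg: "y_avg = (\<Sum>j<N. y j t) / real N"
    using y_sum_const[OF assms(1)] by (simp add: y_avg_def)
  have "\<bar>y_avg - y r t\<bar> = \<bar>\<Sum>j<N. y j t - y r t\<bar> / real N"
    using assms(2) unfolding avg by (simp add: sum_subtractf field_simps)
  also have "\<dots> \<le> (\<Sum>j<N. d) / real N"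
    using spread by (intro divide_right_mono order_trans[OF sum_abs sum_mono]) auto
  finally have "\<bar>y_avg - y r t\<bar> \<le> d" using assms(2) by simp
  then have "\<bar>y i t - y_avg\<bar> \<le> 2 * d" if "i < N" for i
    using spread that by (auto simp: abs_le_iff)
  moreover have "0 \<le> d" using spread assms(2) by force
  ultimately have "(y i t - y_avg)\<^sup>2 \<le> (2 * d)\<^sup>2" if "i < N" for i
    using that power2_le_iff_abs_le[of "2 * d" "y i t - y_avg"] by simp
  then have "disagreement t \<le> (\<Sum>i<N. (2 * d)\<^sup>2)"
    unfolding disagreement_def by (intro sum_mono) auto
  then show ?thesis by simp
qed

lemma exists_small_disagreement:
  assumes conn: "UJQSC N \<alpha> \<sigma>" and "0 < N" "0 < \<epsilon>"
  shows "\<exists>t\<ge>0. disagreement t \<le> \<epsilon>"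
proof -
  obtain T where T: "T > 0" and spanning: "\<forall>t\<ge>0. \<exists>r<N. \<forall>v<N. (r, v) \<in> (union_edges N \<alpha> \<sigma> t T)\<^sup>*"
    using conn unfolding UJQSC_def by blast
  obtain amin amax where am: "amin > 0" "amax > 0"
    and bounds: "\<forall>k\<in>S. \<forall>i<N. \<forall>j<N. \<alpha> k i j \<le> amax \<and> (\<alpha> k i j > 0 \<longrightarrow> amin \<le> \<alpha> k i j)"
    by (rule weight_bounds)
  define d where "d = sqrt (\<epsilon> / real N) / 2"
  define e where "e = d / real N ^ 2"
  define c where "c = e / 3"
  define \<beta> where "\<beta> = e / (3 * (T + \<tau>D))"
  define \<Delta>0 where "\<Delta>0 = min (amin * c\<^sup>2 * \<tau>D) (e * \<beta> / (3 * real N * amax))"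
  have pos: "0 < d" "0 < e" "0 < c" "0 < \<beta>" "0 < \<Delta>0"
    using assms(2,3) T am dwell_pos by (simp_all add: d_def e_def c_def \<beta>_def \<Delta>0_def)
  have "\<exists>t0\<ge>0. disagreement t0 - disagreement (t0 + (T + 2 * \<tau>D)) < \<Delta>0"
    using disagreement_nonneg T dwell_pos pos(5) by (intro nonneg_small_decrement) auto
  then obtain t0 where t0: "0 \<le> t0" and drop: "disagreement t0 - disagreement (t0 + (T + 2 * \<tau>D)) < \<Delta>0"
    by blast
  define t where "t = t0 + \<tau>D"
  have t: "\<tau>D \<le> t" "0 \<le> t" and window: "t - \<tau>D = t0" "t + T + \<tau>D = t0 + (T + 2 * \<tau>D)"
    using t0 dwell_pos by (auto simp: t_def)
  define \<Delta> where "\<Delta> = disagreement t0 - disagreement (t0 + (T + 2 * \<tau>D))"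
  have "\<bar>y i t - y j t\<bar> < e" if edge: "(j, i) \<in> union_edges N \<alpha> \<sigma> t T" for i j
  proof -
    have "\<Delta> < amin * c\<^sup>2 * \<tau>D" using drop by (simp add: \<Delta>_def \<Delta>0_def)
    then have "\<bar>y i t - y j t\<bar> < c + \<beta> * (T + \<tau>D) + real N * amax / \<beta> * \<Delta>"
      using union_edge_close[OF bounds edge t(1) _ pos(4), of c] pos(3) unfolding window \<Delta>_def by simp
    moreover have "real N * amax / \<beta> * \<Delta> < e / 3"
      using drop pos am assms(2) by (simp add: \<Delta>_def \<Delta>0_def field_simps)
    moreover have "\<beta> * (T + \<tau>D) = e / 3" using T dwell_pos by (simp add: \<beta>_def field_simps)
    ultimately show ?thesis unfolding c_def by linarith
  qed
  moreover obtain r where r: "r < N" and reach: "\<forall>v<N. (r, v) \<in> (union_edges N \<alpha> \<sigma> t T)\<^sup>*"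
    using spanning t by blast
  moreover have "union_edges N \<alpha> \<sigma> t T \<subseteq> {..<N} \<times> {..<N}"
    unfolding union_edges_def by auto
  ultimately have "\<forall>v<N. \<bar>y v t - y r t\<bar> \<le> real N ^ 2 * e"
    using rtrancl_variation_bound[where v = "\<lambda>i. y i t"] pos(2) by (simp add: case_prod_beta)
  then have "disagreement t \<le> real N * (2 * d)\<^sup>2"
    using disagreement_le_spread[OF t(2) r] assms(2) by (simp add: e_def)
  also have "\<dots> = \<epsilon>" using assms(2,3) by (simp add: d_def power_mult_distrib)
  finally show ?thesis using t by blast
qed

lemma y_tendsto:
  assumes "UJQSC N \<alpha> \<sigma>" "i < N"
  shows "(y i \<longlongrightarrow> y_avg) at_top"
  unfolding tendsto_iff
proof (intro allI impI)
  fix \<epsilon> :: real assume "\<epsilon> > 0"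
  then obtain t0 where t0: "0 \<le> t0" "disagreement t0 \<le> \<epsilon>\<^sup>2 / 2"
    using exists_small_disagreement[OF assms(1), of "\<epsilon>\<^sup>2 / 2"] assms(2) by auto
  have "(y i t - y_avg)\<^sup>2 < \<epsilon>\<^sup>2" if "t0 \<le> t" for t
  proof -
    have "(y i t - y_avg)\<^sup>2 \<le> disagreement t"
      unfolding disagreement_def using assms(2) by (intro member_le_sum) auto
    also have "\<dots> \<le> disagreement t0" using disagreement_antimono t0 that by simp
    moreover have "0 < \<epsilon>\<^sup>2" using \<open>\<epsilon> > 0\<close> by simp
    ultimately show ?thesis using t0 by linarith
  qed
  then have "\<bar>y i t - y_avg\<bar> < \<epsilon>" if "t0 \<le> t" for t
    using that power_less_imp_less_base[of "\<bar>y i t - y_avg\<bar>" 2 \<epsilon>] \<open>\<epsilon> > 0\<close> by simp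
  then show "\<forall>\<^sub>F t in at_top. dist (y i t) y_avg < \<epsilon>"
    unfolding eventually_at_top_linorder dist_real_def by blast
qed

end

section \<open>Convergence of the states\<close>

lemma coeff_char_poly:
  "coeff (char_poly m a) j
     = (if j < m - 1 then complex_of_real (a (j + 1)) else if j = m - 1 then 1 else 0)"
proof -
  have "(\<Sum>k\<in>{1..m-1}. coeff (monom (complex_of_real (a k)) (k - 1)) j)
      = (\<Sum>k\<in>{1..m-1}. if k = j + 1 then complex_of_real (a k) else 0)"
    by (intro sum.cong refl) (auto simp: coeff_monom)
  also have "\<dots> = (if j < m - 1 then complex_of_real (a (j + 1)) else 0)"
    by (subst sum.delta) auto
  finally show ?thesis
    unfolding char_poly_def coeff_add coeff_sum by (auto simp: coeff_monom)
qed

lemma degree_char_poly: "degree (char_poly m a) = m - 1"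
proof (rule antisym)
  show "degree (char_poly m a) \<le> m - 1" by (rule degree_le) (auto simp: coeff_char_poly)
  show "m - 1 \<le> degree (char_poly m a)" by (rule le_degree) (simp add: coeff_char_poly)
qed

context switched_network
begin

lemma y_split: "y i t = (\<Sum>k<m - 1. a (k + 1) * x i t k) + x i t (m - 1)"
proof -
  obtain n where m: "m = Suc n" using m2 by (cases m) auto
  then show ?thesis unfolding y_def rowmul_def by (simp add: K2_def)
qed

lemma state_companion_deriv:
  assumes "0 < t" "t \<notin> range ts" "i < N" "l < m - 1"
  shows "((\<lambda>s. complex_of_real (x i s l)) has_vector_derivative
           companion_rhs (char_poly m a) (\<lambda>k. complex_of_real (x i t k)) (complex_of_real (y i t)) l) (at t)"
proof -
  have "closed_loop N m a \<alpha> (\<sigma> t) (\<lambda>j. x j t) i l = x i t (Suc l)"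
    using assms(4) by (simp add: closed_loop_def Amul_def Bmul_def)
  then have "((\<lambda>s. x i s l) has_real_derivative x i t (Suc l)) (at t)"
    using state_deriv[OF assms(1-3), of l] assms(4) by simp
  moreover have "x i t (Suc l) = (if Suc l < m - 1 then x i t (Suc l)
      else y i t - (\<Sum>k<m - 1. a (k + 1) * x i t k))"
    using y_split[of i t] assms(4) by (cases "Suc l = m - 1") auto
  ultimately show ?thesis
    using has_vector_derivative_of_real assms(4)
    by (fastforce simp: companion_rhs_def degree_char_poly coeff_char_poly)
qed

lemma state_tendsto:
  assumes hurwitz: "\<forall>z. poly (char_poly m a) z = 0 \<longrightarrow> Re z < 0"
    and conn: "UJQSC N \<alpha> \<sigma>" and "i < N" "l < m"
  shows "((\<lambda>t. x i t l) \<longlongrightarrow> (if l = 0 then y_avg / a 1 else 0)) at_top"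
proof -
  have coeff0: "coeff (char_poly m a) 0 = complex_of_real (a 1)"
    using m2 by (simp add: coeff_char_poly)
  then have a1: "a 1 \<noteq> 0"
    using hurwitz by (metis poly_0_coeff_0 of_real_0 zero_complex.sel(1) less_irrefl)
  have low: "((\<lambda>t. x i t k) \<longlongrightarrow> (if k = 0 then y_avg / a 1 else 0)) at_top" if "k < m - 1" for k
  proof -
    have "((\<lambda>t. complex_of_real (x i t k)) \<longlongrightarrow>
        (if k = 0 then complex_of_real y_avg / coeff (char_poly m a) 0 else 0)) at_top"
    proof (rule companion_system_tendsto[OF _ hurwitz finite_switching_times])
      show "lead_coeff (char_poly m a) = 1" by (simp add: degree_char_poly coeff_char_poly)
      show "continuous_on {0..} (\<lambda>t. complex_of_real (x i t l))" if "l < degree (char_poly m a)" for l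
        using cont assms(3) that by (intro continuous_intros) (auto simp: degree_char_poly)
      show "((\<lambda>t. complex_of_real (y i t)) \<longlongrightarrow> complex_of_real y_avg) at_top"
        by (intro tendsto_of_real y_tendsto conn assms(3))
    qed (use state_companion_deriv assms(3) that in \<open>auto simp: degree_char_poly\<close>)
    then have "((\<lambda>t. complex_of_real (x i t k)) \<longlongrightarrow>
        complex_of_real (if k = 0 then y_avg / a 1 else 0)) at_top"
      using coeff0 by (cases "k = 0") (simp_all add: of_real_divide)
    then show ?thesis unfolding tendsto_of_real_iff .
  qed
  have "((\<lambda>t. y i t - (\<Sum>k<m - 1. a (k + 1) * x i t k)) \<longlongrightarrow>
      y_avg - (\<Sum>k<m - 1. a (k + 1) * (if k = 0 then y_avg / a 1 else 0))) at_top"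
    by (intro tendsto_intros y_tendsto conn assms(3) low) simp
  moreover have "(\<Sum>k<m - 1. a (k + 1) * (if k = 0 then y_avg / a 1 else 0)) = y_avg"
    using a1 m2 by (simp add: if_distrib sum.delta cong: if_cong)
  ultimately have last: "((\<lambda>t. x i t (m - 1)) \<longlongrightarrow> 0) at_top"
    using y_split[of i] by simp
  show ?thesis
  proof (cases "l < m - 1")
    case False
    then have "l = m - 1" "l \<noteq> 0" using assms(4) m2 by auto
    then show ?thesis using last by simp
  qed (rule low)
qed

end

theorem mainTheorem3:
  fixes N m :: nat and a :: "nat \<Rightarrow> real"
    and S :: "'k set" and \<alpha> :: "'k \<Rightarrow> nat \<Rightarrow> nat \<Rightarrow> real"
    and \<sigma> :: "real \<Rightarrow> 'k" and \<tau>D :: real and ts :: "nat \<Rightarrow> real"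
    and x :: "nat \<Rightarrow> real \<Rightarrow> nat \<Rightarrow> real"
  assumes m2: "m \<ge> 2"
    and hurwitz: "\<forall>z. poly (char_poly m a) z = 0 \<longrightarrow> Re z < 0"
    and finS: "finite S"
    and weights_nonneg: "\<forall>k\<in>S. \<forall>i j. \<alpha> k i j \<ge> 0"
    and no_loops: "\<forall>k\<in>S. \<forall>i. \<alpha> k i i = 0"
    and sigma_in: "\<forall>t\<ge>0. \<sigma> t \<in> S"
    and dwell: "\<tau>D > 0" "dwell_switching \<tau>D \<sigma> ts"
    and conn: "UJQSC N \<alpha> \<sigma>"
    and bal: "\<forall>k\<in>S. balanced N \<alpha> k"
    and cont: "\<forall>i<N. \<forall>l<m. continuous_on {0..} (\<lambda>t. x i t l)"
    and ode: "\<forall>n t. ts n < t \<and> t < ts (Suc n) \<longrightarrow>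
               (\<forall>i<N. \<forall>l<m. ((\<lambda>s. x i s l) has_real_derivative
                   closed_loop N m a \<alpha> (\<sigma> t) (\<lambda>j. x j t) i l) (at t))"
  shows "\<forall>i<N. \<forall>l<m. ((\<lambda>t. x i t l) \<longlongrightarrow>
           (if l = 0 then (1 / (a 1 * real N)) * (\<Sum>j<N. rowmul m (K2 m a) (x j 0)) else 0)) at_top"
proof -
  interpret switched_network \<tau>D \<sigma> ts N m a S \<alpha> x
    by unfold_locales (use assms in auto)
  have limit: "1 / (a 1 * real N) * (\<Sum>j<N. rowmul m (K2 m a) (x j 0)) = y_avg / a 1"
    by (simp add: y_avg_def y_def)
  show ?thesis
    unfolding limit by (intro allI impI state_tendsto[OF hurwitz conn])
qed

end
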